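(* Assume the setting of the context. Then for all sufficiently small $\epsilon>0$ there exist numbers $0<\widetilde{x}_-<\widetilde{x}_+$, depending only on $C_0,C_2,C_3,\epsilon$ (and the chosen function $\lambda$), such that for every $\sigma\in\Sigma$ $$x\in[\widetilde{x}_-,\widetilde{x}_+]\quad\Longrightarrow\quad Q^\epsilon_\sigma\cdot(D_{\kappa_\sigma}\cdot x)\;\le\;\Lambda\,(D_{\kappa_\sigma}\cdot x),$$ and moreover $$\lim_{\epsilon\to0}\frac{\lambda\,\widetilde{x}_-}{\epsilon}=\frac{C_2e^{2C_0}}{2C_0},\qquad\lim_{\epsilon\to0}\frac{\epsilon\,\widetilde{x}_+}{\lambda}=\frac{2C_0}{C_2e^{2C_0}}.$$
   Context: Let $(\Sigma,\mathbf{p})$ be a probability space. For each $\sigma\in\Sigma$ and $\epsilon\in[-1,1]$ let real numbers $a_\sigma,b_\sigma$, $\kappa_\sigma>0$ and $\alpha^\epsilon_\sigma,\beta^\epsilon_\sigma,\gamma^\epsilon_\sigma,\delta^\epsilon_\sigma$ be given, with $A^\epsilon_\sigma=\begin{pmatrix}\alpha^\epsilon_\sigma&\beta^\epsilon_\sigma\\ \gamma^\epsilon_\sigma&\delta^\epsilon_\sigma\end{pmatrix}$. Assume that for all $\sigma$: $|\log(\kappa_\sigma)|\le C_0$, $a_\sigma-|b_\sigma|\ge C_1$, $a_\sigma+|b_\sigma|\le C_2$, and $\|A^\epsilon_\sigma\|\le C_3$ for $|\epsilon|\le1$, with constants $C_0,C_1,C_2,C_3\in(0,\infty)$. On $\mathbb{R}\cup\{\infty\}$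 define $D_{\kappa}\cdot x=\kappa^2x$ and $$Q^\epsilon_\sigma\cdot x=\frac{(1+\epsilon^2\alpha^\epsilon_\sigma)x+(a_\sigma-b_\sigma-\epsilon\beta^\epsilon_\sigma)\epsilon}{1+\epsilon^2\delta^\epsilon_\sigma-(a_\sigma+b_\sigma+\epsilon\gamma^\epsilon_\sigma)\epsilon x}.$$ Let $\lambda=\lambda(\epsilon)>0$ be a function of $\epsilon>0$ with $\lim_{\epsilon\to0}\lambda=0$ and $\lim_{\epsilon\to0}\frac{\log(\lambda)}{\log(\epsilon)}=0$ (hence also $\epsilon/\lambda\to0$), and set $\Lambda=e^{2C_0\lambda}$. *)

theory Defs
  imports "HOL-Analysis.Analysis"
begin

definition mat2 :: "real \<Rightarrow> real \<Rightarrow> real \<Rightarrow> real \<Rightarrow> real^2^2" where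
  "mat2 p q r s = (\<chi> i j. if i = 1 then (if j = 1 then p else q) else (if j = 1 then r else s))"

definition mnorm :: "real^2^2 \<Rightarrow> real" where
  "mnorm A = onorm (\<lambda>v. A *v v)"

definition mobius :: "real \<Rightarrow> real \<Rightarrow> real \<Rightarrow> real \<Rightarrow> real \<Rightarrow> ereal" where
  "mobius p q r s x = (if r * x + s = 0 then PInfty else ereal ((p * x + q) / (r * x + s)))"

definition Dact :: "real \<Rightarrow> real \<Rightarrow> real" where
  "Dact k x = k^2 * x"

definition Qact :: "real \<Rightarrow> real \<Rightarrow> real \<Rightarrow> real \<Rightarrow> real \<Rightarrow> real \<Rightarrow> real \<Rightarrow> real \<Rightarrow> ereal" where
  "Qact a b al be ga de e x =
     mobius (1 + e^2 * al) ((a - b - e * be) * e) (- ((a + b + e * ga) * e)) (1 + e^2 * de) x"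

end

theory Submission
  imports Defs
begin

(* Put y = kappa^2 x.  The perturbed coefficients a + b + e gamma and a - b - e beta are at most
   M = C2 + C3 e, so after clearing the positive denominator Q.y <= Lam y follows from
     M e (Lam y^2 + 1) <= y (Lam - 1 - C3 e^2 (Lam + 1)),
   and since Lam - 1 >= 2 C0 lam this is implied by rho y^2 - mu y + rho <= 0 with
   rho = Lam M e / lam -> 0 and mu = 2 C0 - O(e^2 / lam) -> 2 C0; here e / lam -> 0 is essential.
   That quadratic is nonpositive between its roots 2 rho / s and s / (2 rho), s = mu + sqrt (mu^2 - 4 rho^2),
   and kappa^2 lies in [exp (-2 C0), exp (2 C0)], so shrinking the root interval by these factors gives
   the window [xm, xp]; its asymptotics follow from lam rho / e -> C2 and s -> 4 C0. *)

lemma abs_entry_le_mnorm: "\<bar>A $ i $ j\<bar> \<le> mnorm A"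
proof -
  have "\<bar>A $ i $ j\<bar> = \<bar>(A *v axis j 1) $ i\<bar>"
    by (simp add: matrix_vector_mult_basis column_def)
  also have "\<dots> \<le> norm (A *v axis j 1)"
    by (rule component_le_norm_cart)
  also have "\<dots> \<le> onorm (\<lambda>v. A *v v) * norm (axis j (1::real))"
    by (rule onorm) simp
  finally show ?thesis
    by (simp add: mnorm_def)
qed

lemma abs_mat2_entries_le_mnorm:
  "\<bar>p\<bar> \<le> mnorm (mat2 p q r s)" "\<bar>q\<bar> \<le> mnorm (mat2 p q r s)"
  "\<bar>r\<bar> \<le> mnorm (mat2 p q r s)" "\<bar>s\<bar> \<le> mnorm (mat2 p q r s)"
  using abs_entry_le_mnorm[of "mat2 p q r s" 1 1] abs_entry_le_mnorm[of "mat2 p q r s" 1 2]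
    abs_entry_le_mnorm[of "mat2 p q r s" 2 1] abs_entry_le_mnorm[of "mat2 p q r s" 2 2]
  by (simp_all add: mat2_def)

lemma ratio_tendsto_0_of_ln_ratio:
  fixes lam :: "real \<Rightarrow> real"
  assumes lam_pos: "\<forall>\<^sub>F e in at_right 0. lam e > 0"
    and ln_ratio: "((\<lambda>e. ln (lam e) / ln e) \<longlongrightarrow> c) (at_right 0)" and "c < 1"
  shows "((\<lambda>e. e / lam e) \<longlongrightarrow> 0) (at_right 0)"
proof -
  have "((\<lambda>e. 1 - ln (lam e) / ln e) \<longlongrightarrow> 1 - c) (at_right 0)"
    by (intro tendsto_intros ln_ratio)
  then have "LIM e at_right 0. (1 - ln (lam e) / ln e) * ln e :> at_bot"
    using \<open>c < 1\<close> by (intro filterlim_tendsto_pos_mult_at_bot[OF _ _ ln_at_0]) auto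
  then have "((\<lambda>e. exp ((1 - ln (lam e) / ln e) * ln e)) \<longlongrightarrow> 0) (at_right 0)"
    by (rule filterlim_compose[OF exp_at_bot])
  moreover have "\<forall>\<^sub>F e in at_right 0. exp ((1 - ln (lam e) / ln e) * ln e) = e / lam e"
    using lam_pos eventually_at_right_less[of 0] order_tendstoD(2)[OF tendsto_ident_at zero_less_one]
  proof eventually_elim
    case (elim e)
    then have "(1 - ln (lam e) / ln e) * ln e = ln e - ln (lam e)"
      by (simp add: field_simps)
    with elim show ?case
      by (simp add: exp_diff)
  qed
  ultimately show ?thesis
    by (rule Lim_transform_eventually)
qed

lemma mobius_le_ereal_mult:
  assumes "r * y + s > 0" and "p * y + q \<le> L * y * (r * y + s)"
  shows "mobius p q r s y \<le> ereal (L * y)"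
  using assms by (simp add: mobius_def pos_divide_le_eq)

lemma Qact_le_mult:
  fixes e L M C3 y :: real
  assumes "e \<ge> 0" "L \<ge> 0" "y > 0"
    and "a + b + e * ga \<le> M" "a - b - e * be \<le> M" "\<bar>al\<bar> \<le> C3" "\<bar>de\<bar> \<le> C3"
    and numerator: "M * e * (L * y^2 + 1) \<le> y * (L - 1 - C3 * e^2 * (L + 1))"
    and denominator: "M * e * y + C3 * e^2 < 1"
  shows "Qact a b al be ga de e y \<le> ereal (L * y)"
  unfolding Qact_def
proof (rule mobius_le_ereal_mult)
  have "(a + b + e * ga) * e * y \<le> M * e * y"
    using assms by (intro mult_right_mono) auto
  moreover have "e^2 * (- de) \<le> e^2 * C3"
    using assms by (intro mult_left_mono) auto
  ultimately show "- ((a + b + e * ga) * e) * y + (1 + e^2 * de) > 0"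
    using denominator by (simp add: algebra_simps)
  have "L * (- de) \<le> L * C3"
    using assms by (intro mult_left_mono) auto
  then have "- C3 * (L + 1) \<le> L * de - al"
    using assms by (simp add: abs_le_iff algebra_simps)
  then have "y * e^2 * (- C3 * (L + 1)) \<le> y * e^2 * (L * de - al)"
    using assms by (intro mult_left_mono) auto
  moreover have "L * (a + b + e * ga) * e * y^2 \<le> L * M * e * y^2" "(a - b - e * be) * e \<le> M * e"
    using assms by (auto intro!: mult_right_mono mult_left_mono)
  ultimately show "(1 + e^2 * al) * y + (a - b - e * be) * e
      \<le> L * y * (- ((a + b + e * ga) * e) * y + (1 + e^2 * de))"
    using numerator by (simp add: algebra_simps power2_eq_square)
qed

lemma quadratic_le_0_between_roots:
  fixes rho mu y :: real
  assumes "rho > 0" and disc: "4 * rho^2 \<le> mu^2"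
    and s: "s = mu + sqrt (mu^2 - 4 * rho^2)"
    and between: "2 * rho / s \<le> y" "y \<le> s / (2 * rho)"
  shows "rho * y^2 - mu * y + rho \<le> 0"
proof -
  have "s^2 + 4 * rho^2 = 2 * mu * s"
    using disc by (simp add: s power2_eq_square algebra_simps)
  moreover have "s \<noteq> 0"
    using calculation \<open>rho > 0\<close> by auto
  ultimately have "s / 2 + 2 * rho^2 / s = mu"
    by (simp add: field_simps power2_eq_square)
  moreover have "rho * (y - s / (2 * rho)) * (y - 2 * rho / s)
      = rho * y^2 - (s / 2 + 2 * rho^2 / s) * y + rho"
    using \<open>s \<noteq> 0\<close> \<open>rho > 0\<close> by (simp add: field_simps power2_eq_square)
  ultimately have "rho * y^2 - mu * y + rho = rho * (y - s / (2 * rho)) * (y - 2 * rho / s)"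
    by simp
  also have "\<dots> \<le> 0"
    using \<open>rho > 0\<close> between by (intro mult_nonpos_nonneg mult_nonneg_nonpos) auto
  finally show ?thesis .
qed

lemma power2_bounds_of_abs_ln_le:
  fixes k C :: real
  assumes "k > 0" "\<bar>ln k\<bar> \<le> C"
  shows "exp (- 2 * C) \<le> k^2" "k^2 \<le> exp (2 * C)"
proof -
  have "k^2 = exp (2 * ln k)"
    using \<open>k > 0\<close> by (simp add: exp_double)
  then show "exp (- 2 * C) \<le> k^2" "k^2 \<le> exp (2 * C)"
    using assms by (simp_all add: abs_le_iff)
qed

locale Qact_window =
  fixes C0 C2 C3 :: real and lam :: "real \<Rightarrow> real"
  assumes C0_pos: "C0 > 0" and C2_pos: "C2 > 0" and C3_pos: "C3 > 0"
    and lam_pos: "\<And>e. e > 0 \<Longrightarrow> lam e > 0"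
    and lam_tendsto: "(lam \<longlongrightarrow> 0) (at_right 0)"
    and ratio_tendsto: "((\<lambda>e. e / lam e) \<longlongrightarrow> 0) (at_right 0)"
begin

definition Lam :: "real \<Rightarrow> real" where
  "Lam e = exp (2 * C0 * lam e)"

definition M :: "real \<Rightarrow> real" where
  "M e = C2 + C3 * e"

definition rho :: "real \<Rightarrow> real" where
  "rho e = Lam e * M e * (e / lam e)"

definition mu :: "real \<Rightarrow> real" where
  "mu e = 2 * C0 - C3 * e * (e / lam e) * (Lam e + 1)"

definition s :: "real \<Rightarrow> real" where
  "s e = mu e + sqrt (mu e^2 - 4 * rho e^2)"

definition xm :: "real \<Rightarrow> real" where
  "xm e = exp (2 * C0) * (2 * rho e / s e)"

definition xp :: "real \<Rightarrow> real" where
  "xp e = exp (- 2 * C0) * (s e / (2 * rho e))"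

definition admissible :: "real \<Rightarrow> bool" where
  "admissible e \<longleftrightarrow> 0 < e \<and> e \<le> 1 \<and> 4 * rho e^2 \<le> mu e^2 \<and> 0 < s e
     \<and> C3 * e^2 + lam e * s e / 2 < 1 \<and> exp (2 * C0) * (2 * rho e) < s e"

lemma Lam_ge_one_plus: "Lam e \<ge> 1 + 2 * C0 * lam e"
  unfolding Lam_def by (rule exp_ge_add_one_self)

lemma rho_pos: "e > 0 \<Longrightarrow> rho e > 0"
  using lam_pos[of e] C2_pos C3_pos
  by (auto simp: rho_def Lam_def M_def intro!: mult_pos_pos add_pos_pos divide_pos_pos)

lemma Lam_tendsto: "(Lam \<longlongrightarrow> 1) (at_right 0)"
proof -
  have "((\<lambda>e. exp (2 * C0 * lam e)) \<longlongrightarrow> exp (2 * C0 * 0)) (at_right 0)"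
    by (intro tendsto_intros lam_tendsto)
  then show ?thesis
    by (simp add: Lam_def[abs_def])
qed

lemma M_tendsto: "(M \<longlongrightarrow> C2) (at_right 0)"
proof -
  have "((\<lambda>e. C2 + C3 * e) \<longlongrightarrow> C2 + C3 * 0) (at_right 0)"
    by (intro tendsto_intros)
  then show ?thesis
    by (simp add: M_def[abs_def])
qed

lemma rho_tendsto: "(rho \<longlongrightarrow> 0) (at_right 0)"
  using tendsto_mult[OF tendsto_mult[OF Lam_tendsto M_tendsto] ratio_tendsto]
  by (simp add: rho_def[abs_def])

lemma mu_tendsto: "(mu \<longlongrightarrow> 2 * C0) (at_right 0)"
proof -
  have "((\<lambda>e. 2 * C0 - C3 * e * (e / lam e) * (Lam e + 1)) \<longlongrightarrow> 2 * C0 - C3 * 0 * 0 * (1 + 1))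
      (at_right 0)"
    by (intro tendsto_intros Lam_tendsto ratio_tendsto)
  then show ?thesis
    by (simp add: mu_def[abs_def])
qed

lemma discriminant_tendsto: "((\<lambda>e. mu e^2 - 4 * rho e^2) \<longlongrightarrow> (2 * C0)^2) (at_right 0)"
  using tendsto_diff[OF tendsto_power[OF mu_tendsto] tendsto_mult[OF tendsto_const
      tendsto_power[OF rho_tendsto]], of 2 4 2] by simp

lemma s_tendsto: "(s \<longlongrightarrow> 4 * C0) (at_right 0)"
proof -
  have "(s \<longlongrightarrow> 2 * C0 + sqrt ((2 * C0)^2)) (at_right 0)"
    unfolding s_def[abs_def] by (intro tendsto_intros mu_tendsto discriminant_tendsto)
  also have "2 * C0 + sqrt ((2 * C0)^2) = 4 * C0"
    using C0_pos by (simp only: real_sqrt_abs)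
  finally show ?thesis .
qed

lemma eventually_admissible: "\<forall>\<^sub>F e in at_right 0. admissible e"
proof -
  have "((\<lambda>e. C3 * e^2 + lam e * s e / 2) \<longlongrightarrow> C3 * 0^2 + 0 * (4 * C0) / 2) (at_right 0)"
    by (intro tendsto_intros lam_tendsto s_tendsto) simp
  from order_tendstoD(2)[OF this, of 1]
  have small: "\<forall>\<^sub>F e in at_right 0. C3 * e^2 + lam e * s e / 2 < 1"
    by simp
  have "((\<lambda>e. s e - exp (2 * C0) * (2 * rho e)) \<longlongrightarrow> 4 * C0 - exp (2 * C0) * (2 * 0)) (at_right 0)"
    by (intro tendsto_intros s_tendsto rho_tendsto)
  then have order: "\<forall>\<^sub>F e in at_right 0. exp (2 * C0) * (2 * rho e) < s e"
    using C0_pos by (auto dest: order_tendstoD(1)[where a = 0])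
  have disc: "\<forall>\<^sub>F e in at_right 0. 4 * rho e^2 \<le> mu e^2"
    using order_tendstoD(1)[OF discriminant_tendsto, of 0] C0_pos
    by (auto elim: eventually_mono)
  have s_pos: "\<forall>\<^sub>F e in at_right 0. 0 < s e"
    using order_tendstoD(1)[OF s_tendsto, of 0] C0_pos by simp
  show ?thesis
    using eventually_at_right_less[of 0] order_tendstoD(2)[OF tendsto_ident_at zero_less_one]
      disc s_pos small order
    unfolding admissible_def by eventually_elim auto
qed

lemma admissible_imp_xm_pos_less_xp:
  assumes "admissible e"
  shows "0 < xm e" "xm e < xp e"
proof -
  define u where "u = exp (2 * C0) * (2 * rho e) / s e"
  have "0 < u" "u < 1"
    using assms rho_pos by (auto simp: admissible_def u_def)
  moreover have "u * u < 1 * 1"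
    using \<open>0 < u\<close> \<open>u < 1\<close> by (intro mult_strict_mono) auto
  moreover have "xm e = u" "xp e = 1 / u"
    by (simp_all add: u_def xm_def xp_def exp_minus field_simps)
  ultimately show "0 < xm e" "xm e < xp e"
    by (simp_all add: less_divide_eq)
qed

lemma Dact_in_root_interval:
  assumes "admissible e" and "k > 0" "\<bar>ln k\<bar> \<le> C0" and "xm e \<le> x" "x \<le> xp e"
  shows "2 * rho e / s e \<le> Dact k x" "Dact k x \<le> s e / (2 * rho e)"
proof -
  note k = power2_bounds_of_abs_ln_le[OF \<open>k > 0\<close> \<open>\<bar>ln k\<bar> \<le> C0\<close>]
  have "0 < xm e" "xm e < xp e"
    using admissible_imp_xm_pos_less_xp[OF \<open>admissible e\<close>] by auto
  have "2 * rho e / s e = exp (- 2 * C0) * xm e"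
    by (simp add: xm_def exp_minus field_simps)
  also have "\<dots> \<le> k^2 * xm e"
    using k \<open>0 < xm e\<close> by (intro mult_right_mono) auto
  also have "\<dots> \<le> k^2 * x"
    using \<open>xm e \<le> x\<close> by (intro mult_left_mono) auto
  finally show "2 * rho e / s e \<le> Dact k x"
    by (simp add: Dact_def)
  have "k^2 * x \<le> k^2 * xp e"
    using \<open>x \<le> xp e\<close> by (intro mult_left_mono) auto
  also have "\<dots> \<le> exp (2 * C0) * xp e"
    using k \<open>0 < xm e\<close> \<open>xm e < xp e\<close> by (intro mult_right_mono) auto
  also have "\<dots> = s e / (2 * rho e)"
    by (simp add: xp_def exp_minus field_simps)
  finally show "Dact k x \<le> s e / (2 * rho e)"
    by (simp add: Dact_def)
qed

lemma Qact_le_of_quadratic: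
  assumes "admissible e" and "y > 0"
    and quadratic: "rho e * y^2 - mu e * y + rho e \<le> 0" and "y \<le> s e / (2 * rho e)"
    and "a + \<bar>b\<bar> \<le> C2" "\<bar>al\<bar> \<le> C3" "\<bar>be\<bar> \<le> C3" "\<bar>ga\<bar> \<le> C3" "\<bar>de\<bar> \<le> C3"
  shows "Qact a b al be ga de e y \<le> ereal (Lam e * y)"
proof -
  have e: "0 < e" "e \<le> 1" and small: "C3 * e^2 + lam e * s e / 2 < 1"
    using \<open>admissible e\<close> by (simp_all add: admissible_def)
  have "lam e > 0" "rho e > 0"
    using e lam_pos rho_pos by auto
  have "Lam e \<ge> 1"
    using C0_pos \<open>lam e > 0\<close> by (intro order_trans[OF _ Lam_ge_one_plus]) simp
  have "M e * e \<ge> 0"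
    using C2_pos C3_pos e by (simp add: M_def)
  have "lam e * (rho e * y^2 - mu e * y + rho e)
      = Lam e * M e * e * (y^2 + 1) - y * (2 * C0 * lam e - C3 * e^2 * (Lam e + 1))"
    using \<open>lam e > 0\<close> unfolding rho_def mu_def by (simp add: field_simps power2_eq_square)
  moreover have "lam e * (rho e * y^2 - mu e * y + rho e) \<le> 0"
    using \<open>lam e > 0\<close> quadratic by (simp add: mult_nonneg_nonpos)
  moreover have "M e * e \<le> Lam e * (M e * e)"
    using mult_right_mono[OF \<open>Lam e \<ge> 1\<close> \<open>M e * e \<ge> 0\<close>] by simp
  moreover have "y * (2 * C0 * lam e) \<le> y * (Lam e - 1)"
    using Lam_ge_one_plus[of e] \<open>y > 0\<close> by (intro mult_left_mono) auto
  ultimately have numerator: "M e * e * (Lam e * y^2 + 1) \<le> y * (Lam e - 1 - C3 * e^2 * (Lam e + 1))"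
    by (simp add: algebra_simps)
  have "M e * e * y \<le> Lam e * (M e * e * y)"
    using mult_right_mono[OF \<open>Lam e \<ge> 1\<close>, of "M e * e * y"] \<open>M e * e \<ge> 0\<close> \<open>y > 0\<close> by simp
  also have "\<dots> = lam e * rho e * y"
    using \<open>lam e > 0\<close> by (simp add: rho_def)
  also have "\<dots> \<le> lam e * rho e * (s e / (2 * rho e))"
    using \<open>lam e > 0\<close> \<open>rho e > 0\<close> \<open>y \<le> s e / (2 * rho e)\<close> by (intro mult_left_mono) auto
  finally have denominator: "M e * e * y + C3 * e^2 < 1"
    using small \<open>rho e > 0\<close> by simp
  have "e * ga \<le> e * C3" "e * (- be) \<le> e * C3"
    using e assms by (intro mult_left_mono; simp add: abs_le_iff)+
  then have "a + b + e * ga \<le> M e" "a - b - e * be \<le> M e"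
    using \<open>a + \<bar>b\<bar> \<le> C2\<close> abs_ge_self[of b] abs_ge_minus_self[of b]
    by (simp_all add: M_def mult.commute[of C3])
  then show ?thesis
    using e \<open>Lam e \<ge> 1\<close> \<open>y > 0\<close> assms numerator denominator
    by (intro Qact_le_mult[where M = "M e"]) auto
qed

lemma Qact_Dact_le_Lam_Dact:
  assumes "admissible e" and "k > 0" "\<bar>ln k\<bar> \<le> C0" and "xm e \<le> x" "x \<le> xp e"
    and "a + \<bar>b\<bar> \<le> C2" "\<bar>al\<bar> \<le> C3" "\<bar>be\<bar> \<le> C3" "\<bar>ga\<bar> \<le> C3" "\<bar>de\<bar> \<le> C3"
  shows "Qact a b al be ga de e (Dact k x) \<le> ereal (Lam e * Dact k x)"
proof -
  note window = Dact_in_root_interval[OF assms(1-5)]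
  have "0 < rho e" "0 < s e" "4 * rho e^2 \<le> mu e^2"
    using \<open>admissible e\<close> rho_pos by (auto simp: admissible_def)
  then have "0 < Dact k x"
    using window(1) by (meson divide_pos_pos less_le_trans zero_less_numeral mult_pos_pos)
  moreover have "rho e * (Dact k x)^2 - mu e * Dact k x + rho e \<le> 0"
    using \<open>0 < rho e\<close> \<open>4 * rho e^2 \<le> mu e^2\<close> window
    by (intro quadratic_le_0_between_roots[where s = "s e"]) (auto simp: s_def)
  ultimately show ?thesis
    using assms window(2) by (intro Qact_le_of_quadratic) auto
qed

lemma eventually_Qact_le_on_window:
  assumes "\<forall>\<sigma>. \<kappa> \<sigma> > 0 \<and> \<bar>ln (\<kappa> \<sigma>)\<bar> \<le> C0 \<and> a \<sigma> + \<bar>b \<sigma>\<bar> \<le> C2 \<and>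
      (\<forall>e. \<bar>e\<bar> \<le> 1 \<longrightarrow> mnorm (mat2 (\<alpha> \<sigma> e) (\<beta> \<sigma> e) (\<gamma> \<sigma> e) (\<delta> \<sigma> e)) \<le> C3)"
  shows "\<forall>\<^sub>F e in at_right 0. 0 < xm e \<and> xm e < xp e \<and>
    (\<forall>\<sigma> x. xm e \<le> x \<and> x \<le> xp e \<longrightarrow>
      Qact (a \<sigma>) (b \<sigma>) (\<alpha> \<sigma> e) (\<beta> \<sigma> e) (\<gamma> \<sigma> e) (\<delta> \<sigma> e) e (Dact (\<kappa> \<sigma>) x)
        \<le> ereal (Lam e * Dact (\<kappa> \<sigma>) x))"
  using eventually_admissible
proof eventually_elim
  case (elim e)
  then have "\<bar>e\<bar> \<le> 1"
    by (simp add: admissible_def)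
  then have "\<bar>\<alpha> \<sigma> e\<bar> \<le> C3 \<and> \<bar>\<beta> \<sigma> e\<bar> \<le> C3 \<and> \<bar>\<gamma> \<sigma> e\<bar> \<le> C3 \<and> \<bar>\<delta> \<sigma> e\<bar> \<le> C3" for \<sigma>
    using assms abs_mat2_entries_le_mnorm[where p = "\<alpha> \<sigma> e" and q = "\<beta> \<sigma> e"
        and r = "\<gamma> \<sigma> e" and s = "\<delta> \<sigma> e"]
    by (meson order_trans)
  with elim assms show ?case
    using admissible_imp_xm_pos_less_xp Qact_Dact_le_Lam_Dact by simp
qed

lemma lam_xm_tendsto: "((\<lambda>e. lam e * xm e / e) \<longlongrightarrow> C2 * exp (2 * C0) / (2 * C0)) (at_right 0)"
proof -
  have "((\<lambda>e. exp (2 * C0) * (2 * (Lam e * M e)) / s e)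
      \<longlongrightarrow> exp (2 * C0) * (2 * (1 * C2)) / (4 * C0)) (at_right 0)"
    using C0_pos by (intro tendsto_intros Lam_tendsto M_tendsto s_tendsto) auto
  moreover have "\<forall>\<^sub>F e in at_right 0. exp (2 * C0) * (2 * (Lam e * M e)) / s e = lam e * xm e / e"
    using eventually_at_right_less[of 0]
  proof eventually_elim
    case (elim e)
    with lam_pos[of e] show ?case
      by (cases "s e = 0") (simp_all add: xm_def rho_def field_simps)
  qed
  ultimately have "((\<lambda>e. lam e * xm e / e) \<longlongrightarrow> exp (2 * C0) * (2 * (1 * C2)) / (4 * C0)) (at_right 0)"
    by (rule Lim_transform_eventually)
  then show ?thesis
    using C0_pos by (simp add: field_simps)
qed

lemma e_xp_tendsto: "((\<lambda>e. e * xp e / lam e) \<longlongrightarrow> 2 * C0 / (C2 * exp (2 * C0))) (at_right 0)"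
proof -
  have "((\<lambda>e. exp (- 2 * C0) * s e / (2 * (Lam e * M e)))
      \<longlongrightarrow> exp (- 2 * C0) * (4 * C0) / (2 * (1 * C2))) (at_right 0)"
    using C2_pos by (intro tendsto_intros Lam_tendsto M_tendsto s_tendsto) auto
  moreover have "\<forall>\<^sub>F e in at_right 0. exp (- 2 * C0) * s e / (2 * (Lam e * M e)) = e * xp e / lam e"
    using eventually_at_right_less[of 0]
  proof eventually_elim
    case (elim e)
    with lam_pos[of e] rho_pos[of e] show ?case
      by (simp add: xp_def rho_def field_simps)
  qed
  ultimately have "((\<lambda>e. e * xp e / lam e) \<longlongrightarrow> exp (- 2 * C0) * (4 * C0) / (2 * (1 * C2))) (at_right 0)"
    by (rule Lim_transform_eventually)
  then show ?thesis
    using C2_pos by (simp add: exp_minus field_simps)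
qed

end

theorem lemma6:
  fixes C0 C2 C3 :: real and lam :: "real \<Rightarrow> real"
  assumes "C0 > 0" "C2 > 0" "C3 > 0"
    and "\<forall>e>0. lam e > 0"
    and "(lam \<longlongrightarrow> 0) (at_right 0)"
    and "((\<lambda>e. ln (lam e) / ln e) \<longlongrightarrow> 0) (at_right 0)"
  shows "\<exists>xm xp :: real \<Rightarrow> real.
     ((\<lambda>e. lam e * xm e / e) \<longlongrightarrow> C2 * exp (2 * C0) / (2 * C0)) (at_right 0) \<and>
     ((\<lambda>e. e * xp e / lam e) \<longlongrightarrow> 2 * C0 / (C2 * exp (2 * C0))) (at_right 0) \<and>
     (\<forall>(C1::real) (a::'s \<Rightarrow> real) (b::'s \<Rightarrow> real) (\<kappa>::'s \<Rightarrow> real)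
        (\<alpha>::'s \<Rightarrow> real \<Rightarrow> real) (\<beta>::'s \<Rightarrow> real \<Rightarrow> real)
        (\<gamma>::'s \<Rightarrow> real \<Rightarrow> real) (\<delta>::'s \<Rightarrow> real \<Rightarrow> real).
        C1 > 0 \<and>
        (\<forall>\<sigma>. \<kappa> \<sigma> > 0 \<and> \<bar>ln (\<kappa> \<sigma>)\<bar> \<le> C0 \<and> a \<sigma> - \<bar>b \<sigma>\<bar> \<ge> C1 \<and> a \<sigma> + \<bar>b \<sigma>\<bar> \<le> C2 \<and>
             (\<forall>e. \<bar>e\<bar> \<le> 1 \<longrightarrow> mnorm (mat2 (\<alpha> \<sigma> e) (\<beta> \<sigma> e) (\<gamma> \<sigma> e) (\<delta> \<sigma> e)) \<le> C3))
        \<longrightarrow>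
        (\<forall>\<^sub>F e in at_right 0. 0 < xm e \<and> xm e < xp e \<and>
           (\<forall>\<sigma> x. xm e \<le> x \<and> x \<le> xp e \<longrightarrow>
              Qact (a \<sigma>) (b \<sigma>) (\<alpha> \<sigma> e) (\<beta> \<sigma> e) (\<gamma> \<sigma> e) (\<delta> \<sigma> e) e (Dact (\<kappa> \<sigma>) x)
                \<le> ereal (exp (2 * C0 * lam e) * Dact (\<kappa> \<sigma>) x))))"
proof -
  have "((\<lambda>e. e / lam e) \<longlongrightarrow> 0) (at_right 0)"
    using assms(4,6) eventually_at_right_less[of 0]
    by (intro ratio_tendsto_0_of_ln_ratio[where c = 0]) (auto elim: eventually_mono)
  with assms interpret Qact_window C0 C2 C3 lam
    by unfold_locales auto
  show ?thesis
    by (intro exI[of _ xm] exI[of _ xp] conjI allI impI lam_xm_tendsto e_xp_tendsto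
        eventually_Qact_le_on_window[unfolded Lam_def]) auto
qed

end
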